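(* For every positive integer $n$, $$\big((\mathrm{Id}\cdot\varphi)\ast\delta\big)(n)=n\,\delta(n)-\big(\mathrm{Id}\ast(\varphi\delta)\big)(n),$$ where $\mathrm{Id}\cdot\varphi$ is $n\mapsto n\varphi(n)$ and $\varphi\delta$ is the pointwise product.
   Context: The arithmetic derivative $\delta$ is defined by $\delta(p)=1$ for every prime $p$ and $\delta(mn)=m\delta(n)+n\delta(m)$ for all positive integers $m,n$; equivalently $\delta(1)=0$ and $\delta(n)=n\sum_{p^\alpha\| n}\alpha/p$. $\mathrm{Id}(n)=n$, $\varphi$ is Euler's totient function. The Dirichlet convolution is $(u\ast v)(n)=\sum_{d\mid n}u(d)v(n/d)$. *)

theory Defs
  imports "HOL-Number_Theory.Number_Theory"
begin

text \<open>Arithmetic derivative: delta(n) = n * sum over p^a || n of a/p, delta(0)=delta(1)=0.\<close>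
definition arith_deriv :: "nat \<Rightarrow> nat" where
  "arith_deriv n = (\<Sum>p\<in>prime_factors n. multiplicity p n * (n div p))"

definition dirichlet_conv :: "(nat \<Rightarrow> int) \<Rightarrow> (nat \<Rightarrow> int) \<Rightarrow> nat \<Rightarrow> int" where
  "dirichlet_conv u v n = (\<Sum>d | d dvd n. u d * v (n div d))"

end

theory Submission
  imports Defs
begin

text \<open>
  The arithmetic derivative obeys the Leibniz rule \<open>\<delta>(d e) = d \<delta>(e) + e \<delta>(d)\<close>, which comes
  from the additivity of the logarithmic derivative \<open>\<delta>(n)/n = \<Sum> \<alpha>/p\<close> over \<open>p^\<alpha> \<parallel> n\<close>.
  Applying it to every factorisation \<open>n = d (n/d)\<close> and weighting by \<open>g(d)\<close> gives, for any
  arithmetic function \<open>g\<close>, \<open>((Id g) \<ast> \<delta>)(n) + (Id \<ast> g\<delta>)(n) = \<delta>(n) \<Sum>(d | n) g(d)\<close>;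
  for \<open>g = \<phi>\<close> the divisor sum is \<open>n\<close>.
\<close>

definition arith_log_deriv :: "nat \<Rightarrow> real" where
  "arith_log_deriv n = (\<Sum>p\<in>prime_factors n. real (multiplicity p n) / real p)"

lemma arith_log_deriv_eq_sum_superset:
  assumes "finite S" "prime_factors n \<subseteq> S" "\<forall>p\<in>S. prime p"
  shows "arith_log_deriv n = (\<Sum>p\<in>S. real (multiplicity p n) / real p)"
  unfolding arith_log_deriv_def
proof (rule sum.mono_neutral_left[OF assms(1,2)])
  show "\<forall>p\<in>S - prime_factors n. real (multiplicity p n) / real p = 0"
  proof
    fix p assume p: "p \<in> S - prime_factors n"
    then have "multiplicity p n = 0"
      using assms(3) by (cases "n = 0") (auto simp: not_dvd_imp_multiplicity_0 prime_factors_dvd)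
    then show "real (multiplicity p n) / real p = 0" by simp
  qed
qed

lemma arith_log_deriv_mult:
  assumes "a > 0" "b > 0"
  shows "arith_log_deriv (a * b) = arith_log_deriv a + arith_log_deriv b"
proof -
  define S where "S = prime_factors a \<union> prime_factors b"
  have S: "finite S" "\<forall>p\<in>S. prime p"
    unfolding S_def by auto
  have "arith_log_deriv (a * b) = (\<Sum>p\<in>S. real (multiplicity p (a * b)) / real p)"
    using assms S by (intro arith_log_deriv_eq_sum_superset) (auto simp: S_def prime_factors_product)
  also have "\<dots> = (\<Sum>p\<in>S. real (multiplicity p a) / real p + real (multiplicity p b) / real p)"
    using assms S(2) by (intro sum.cong refl)
      (simp add: prime_elem_multiplicity_mult_distrib add_divide_distrib)
  also have "\<dots> = arith_log_deriv a + arith_log_deriv b"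
    using S by (simp add: sum.distrib arith_log_deriv_eq_sum_superset[of S] S_def)
  finally show ?thesis .
qed

lemma arith_deriv_eq_mult_log_deriv: "real (arith_deriv n) = real n * arith_log_deriv n"
proof -
  have "real (arith_deriv n) = (\<Sum>p\<in>prime_factors n. real (multiplicity p n) * (real n / real p))"
    unfolding arith_deriv_def of_nat_sum
    by (intro sum.cong refl) (simp add: real_of_nat_div in_prime_factors_imp_dvd)
  also have "\<dots> = real n * arith_log_deriv n"
    unfolding arith_log_deriv_def sum_distrib_left by (intro sum.cong refl) simp
  finally show ?thesis .
qed

lemma arith_deriv_0 [simp]: "arith_deriv 0 = 0"
  by (simp add: arith_deriv_def)

lemma arith_deriv_mult: "arith_deriv (a * b) = a * arith_deriv b + b * arith_deriv a"
proof (cases "a = 0 \<or> b = 0")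
  case True
  then show ?thesis by auto
next
  case False
  then have "real (arith_deriv (a * b)) = real (a * arith_deriv b + b * arith_deriv a)"
    by (simp add: arith_deriv_eq_mult_log_deriv arith_log_deriv_mult algebra_simps)
  then show ?thesis
    by (simp only: of_nat_eq_iff)
qed

lemma dirichlet_conv_commute:
  assumes "n > 0"
  shows "dirichlet_conv u v n = dirichlet_conv v u n"
  unfolding dirichlet_conv_def
  by (rule sum.reindex_bij_witness[of _ "\<lambda>d. n div d" "\<lambda>d. n div d"])
     (use assms in \<open>auto simp: dvd_div_eq_mult div_div_eq_right mult.commute\<close>)

lemma dirichlet_conv_id_weighted_arith_deriv:
  fixes g :: "nat \<Rightarrow> int"
  assumes "n > 0"
  shows "dirichlet_conv (\<lambda>k. int k * g k) (\<lambda>k. int (arith_deriv k)) n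
         + dirichlet_conv (\<lambda>k. int k) (\<lambda>k. g k * int (arith_deriv k)) n
         = int (arith_deriv n) * (\<Sum>d | d dvd n. g d)"
proof -
  have "dirichlet_conv (\<lambda>k. int k * g k) (\<lambda>k. int (arith_deriv k)) n
        + dirichlet_conv (\<lambda>k. g k * int (arith_deriv k)) (\<lambda>k. int k) n
        = (\<Sum>d | d dvd n. g d * int (d * arith_deriv (n div d) + (n div d) * arith_deriv d))"
    unfolding dirichlet_conv_def sum.distrib[symmetric]
    by (intro sum.cong refl) (simp add: algebra_simps)
  also have "\<dots> = (\<Sum>d | d dvd n. g d * int (arith_deriv n))"
    by (intro sum.cong refl) (auto simp flip: arith_deriv_mult)
  finally show ?thesis
    using assms by (simp add: dirichlet_conv_commute[of n "\<lambda>k. int k"] sum_distrib_left mult.commute)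
qed

theorem corollary2p7:
  fixes n :: nat
  assumes "n > 0"
  shows "dirichlet_conv (\<lambda>k. int k * int (totient k)) (\<lambda>k. int (arith_deriv k)) n
         = int n * int (arith_deriv n)
           - dirichlet_conv (\<lambda>k. int k) (\<lambda>k. int (totient k) * int (arith_deriv k)) n"
proof -
  have "(\<Sum>d | d dvd n. int (totient d)) = int n"
    by (simp flip: of_nat_sum add: totient_divisor_sum)
  then show ?thesis
    using dirichlet_conv_id_weighted_arith_deriv[OF assms, of "\<lambda>k. int (totient k)"]
    by (simp add: mult.commute)
qed

end
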